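(* Let $a>0$, $p>1$, and let $\phi\in C^1((0,a])\cap C^0([0,a])$ satisfy $\phi(0)=0$, $\phi(t)>0$ for $t\in(0,a]$, and $c_1t^{p-1+\delta}\le\phi(t)\le c_2t^{p-1+\delta}$ for all $t\in(0,a]$, for some constants $c_1,c_2,\delta>0$. Suppose moreover that $\phi$ is twice differentiable in $(0,a)$ and $(\phi'/\phi)'(t)<0$ for all $t\in(0,a)$. Let $\eta_a(t)=\phi(t)^{-\frac1{p-1}}\big/\int_t^a\phi(\sigma)^{-\frac1{p-1}}\,d\sigma$ for $t\in(0,a)$, let $T\in(0,a)$ be the unique point such that $\eta_a'<0$ on $(0,T)$ and $\eta_a'>0$ on $(T,a)$, and let $\eta_{aT}(t)=\eta_a(t)$ for $t\in(0,T]$, $\eta_{aT}(t)=\eta_a(T)$ for $t\in(T,a]$. Then for every $u\in\mathcal E$, \[ \int_0^a|u'|^p\phi\,dt\;\ge\;\left(\frac{p-1}{p}\right)^p\int_0^a|u|^p\eta_{aT}^p\phi\,dt, \] and the constant $\left(\frac{p-1}{p}\right)^p$ is sharp (it cannot be replaced by a larger constant).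
   Context: $W^{1,p}(0,a;\phi)=\{u:[0,a]\to\mathbb R:\ u\in L^1_{\mathrm{loc}}[0,a],\ \int_0^a|u'|^p\phi\,dt<\infty\}$, with $u'$ the distributional derivative (such $u$ are absolutely continuous on $[\epsilon,a]$ for each $\epsilon\in(0,a)$), and $\mathcal E=\{u\in W^{1,p}(0,a;\phi): u(a)=0\}$. *)

theory Defs
  imports "HOL-Analysis.Analysis"
begin

definition eta_a :: "(real \<Rightarrow> real) \<Rightarrow> real \<Rightarrow> real \<Rightarrow> real \<Rightarrow> real" where
  "eta_a \<phi> p a t = \<phi> t powr (-1 / (p - 1)) / integral {t..a} (\<lambda>s. \<phi> s powr (-1 / (p - 1)))"

definition eta_aT :: "(real \<Rightarrow> real) \<Rightarrow> real \<Rightarrow> real \<Rightarrow> real \<Rightarrow> real \<Rightarrow> real" where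
  "eta_aT \<phi> p a T t = (if t \<le> T then eta_a \<phi> p a t else eta_a \<phi> p a T)"

text \<open>g is the (distributional) derivative of u on (0,a]: u is absolutely continuous on
  every [x,a], 0<x, with u(y)-u(x) = int_x^y g.\<close>
definition weak_deriv_on :: "real \<Rightarrow> (real \<Rightarrow> real) \<Rightarrow> (real \<Rightarrow> real) \<Rightarrow> bool" where
  "weak_deriv_on a u g \<longleftrightarrow>
     (\<forall>x\<in>{0<..a}. g absolutely_integrable_on {x..a}) \<and>
     (\<forall>x y. 0 < x \<longrightarrow> x \<le> y \<longrightarrow> y \<le> a \<longrightarrow> u y - u x = integral {x..y} g)"

definition energy :: "real \<Rightarrow> real \<Rightarrow> (real \<Rightarrow> real) \<Rightarrow> (real \<Rightarrow> real) \<Rightarrow> ennreal" where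
  "energy a p \<phi> g = (\<integral>\<^sup>+ t \<in> {0<..<a}. ennreal (\<bar>g t\<bar> powr p * \<phi> t) \<partial>lborel)"

definition in_E :: "real \<Rightarrow> real \<Rightarrow> (real \<Rightarrow> real) \<Rightarrow> (real \<Rightarrow> real) \<Rightarrow> (real \<Rightarrow> real) \<Rightarrow> bool" where
  "in_E a p \<phi> u g \<longleftrightarrow>
     u absolutely_integrable_on {0..a} \<and> weak_deriv_on a u g \<and>
     energy a p \<phi> g < \<infinity> \<and> u a = 0"

definition weighted_rhs :: "real \<Rightarrow> real \<Rightarrow> (real \<Rightarrow> real) \<Rightarrow> (real \<Rightarrow> real) \<Rightarrow> (real \<Rightarrow> real) \<Rightarrow> ennreal" where
  "weighted_rhs a p \<phi> w u = (\<integral>\<^sup>+ t \<in> {0<..<a}. ennreal (\<bar>u t\<bar> powr p * w t powr p * \<phi> t) \<partial>lborel)"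

end

theory Submission
  imports Defs
begin

text \<open>
  Write \<psi> = \<phi>^(-1/(p-1)) and I(t) = \<integral>[t,a] \<psi>, so that \<eta>_a = \<psi>/I and \<eta>_a' = \<psi> h / I^2 with
  h = \<psi> - (\<phi>'/\<phi>) I / (p - 1). Log-concavity of \<phi> makes h strictly increasing, h(a) = \<psi>(a) > 0,
  and h is negative somewhere because the growth bounds on \<phi> force \<eta>_a(t) \<ge> const/t near 0.
  Hence \<eta>_a has a unique turning point T, and \<eta>_aT \<le> \<eta>_a.

  For the inequality let r = (p-1)/p. Since u(t) = -\<integral>[t,a] u', Hoelder's inequality with weight
  \<phi> I^r gives |u(t)|^p \<le> (I(t)^r / r)^(p-1) \<integral>[t,a] |u'|^p \<phi> I^r. Multiply by \<eta>_a^p \<phi> = \<psi> I^(-p),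
  integrate and exchange the order of integration: the inner integral
  \<integral>[0,s] r^(1-p) \<psi> I^(-1-r) = r^(-p) I(s)^(-r) cancels the factor I^r, leaving r^(-p) \<integral> |u'|^p \<phi>.

  For sharpness take u = min(I, I(\<tau>))^\<alpha> with \<alpha> > r. Its energy is \<alpha>^p I(\<tau>)^e / e and its weighted
  mass is at least (I(\<tau>)^e - I(T)^e) / e, where e = p\<alpha> - p + 1. As I(\<tau>) \<rightarrow> \<infinity> for \<tau> \<rightarrow> 0, the
  quotient tends to \<alpha>^p, which is arbitrarily close to r^p.
\<close>

section \<open>Weighted Young and Hoelder inequalities\<close>

lemma Youngs_inequality_weighted:
  fixes p x w \<mu> :: real
  assumes p: "p > 1" and x: "x \<ge> 0" and w: "w > 0" and \<mu>: "\<mu> > 0"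
  shows "x \<le> \<mu> / p * (x powr p * w) + (p - 1) / p * \<mu> powr (-1 / (p - 1)) * w powr (-1 / (p - 1))"
proof -
  define p' where "p' = p / (p - 1)"
  have p': "p' > 1" "1 / p + 1 / p' = 1" using p by (auto simp: p'_def field_simps)
  define X where "X = (\<mu> * w) powr (1 / p) * x"
  define Y where "Y = (\<mu> * w) powr (-1 / p)"
  have "X * Y = x"
    using \<mu> w by (simp add: X_def Y_def powr_add[symmetric])
  moreover have "X powr p = \<mu> * (x powr p * w)"
    using \<mu> w x p by (simp add: X_def powr_mult powr_powr)
  moreover have "Y powr p' = \<mu> powr (-1 / (p - 1)) * w powr (-1 / (p - 1))"
    using \<mu> w p by (simp add: Y_def p'_def powr_powr powr_mult)
  moreover have "X * Y \<le> X powr p / p + Y powr p' / p'"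
    using Youngs_inequality[OF p p'(1) p'(2)] x \<mu> w by (simp add: X_def Y_def)
  ultimately show ?thesis
    using p by (simp add: p'_def field_simps)
qed

lemma Young_bound_at_optimum:
  fixes p A B :: real
  assumes p: "p > 1" and A: "A > 0" and B: "B > 0"
  defines "\<mu> \<equiv> (B / A) powr ((p - 1) / p)"
  shows "\<mu> / p * A + (p - 1) / p * \<mu> powr (-1 / (p - 1)) * B = B powr ((p - 1) / p) * A powr (1 / p)"
proof -
  have e: "1 - (p - 1) / p = 1 / p" and e': "1 - 1 / p = (p - 1) / p"
    using p by (simp_all add: field_simps)
  have "\<mu> * A = B powr ((p - 1) / p) * (A powr 1 / A powr ((p - 1) / p))"
    using A B by (simp add: \<mu>_def powr_divide)
  also have "A powr 1 / A powr ((p - 1) / p) = A powr (1 / p)"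
    using e by (simp only: powr_diff[symmetric])
  finally have 1: "\<mu> * A = B powr ((p - 1) / p) * A powr (1 / p)" .
  have "\<mu> powr (-1 / (p - 1)) = (B / A) powr (-1 / p)"
    using p by (simp add: \<mu>_def powr_powr)
  then have "\<mu> powr (-1 / (p - 1)) * B = B powr 1 / B powr (1 / p) * A powr (1 / p)"
    using A B by (simp add: powr_divide powr_minus_divide)
  also have "B powr 1 / B powr (1 / p) = B powr ((p - 1) / p)"
    using e' by (simp only: powr_diff[symmetric])
  finally have 2: "\<mu> powr (-1 / (p - 1)) * B = B powr ((p - 1) / p) * A powr (1 / p)" .
  have "\<mu> / p * A + (p - 1) / p * \<mu> powr (-1 / (p - 1)) * B
      = (1 / p) * (\<mu> * A) + (p - 1) / p * (\<mu> powr (-1 / (p - 1)) * B)"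
    by (simp add: algebra_simps)
  also have "\<dots> = B powr ((p - 1) / p) * A powr (1 / p)"
    unfolding 1 2 using p by (simp add: field_simps)
  finally show ?thesis .
qed

lemma powr_le_of_Young_bounds:
  fixes p X A B :: real
  assumes p: "p > 1" and X: "X \<ge> 0" and A: "A \<ge> 0" and B: "B > 0"
    and Young: "\<And>\<mu>. \<mu> > 0 \<Longrightarrow> X \<le> \<mu> / p * A + (p - 1) / p * \<mu> powr (-1 / (p - 1)) * B"
  shows "X powr p \<le> A * B powr (p - 1)"
proof (cases "A = 0")
  case True
  have "X = 0"
  proof (rule ccontr)
    assume "X \<noteq> 0"
    with X have X_pos: "X > 0" by simp
    define c where "c = 2 * ((p - 1) / p) * B / X"
    have c_pos: "c > 0" using p B X_pos by (simp add: c_def)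
    have "(c powr (p - 1)) powr (-1 / (p - 1)) = 1 / c"
      using p c_pos by (simp add: powr_powr powr_minus_divide)
    then have half: "(p - 1) / p * (c powr (p - 1)) powr (-1 / (p - 1)) * B = X / 2"
      using p B X_pos by (simp add: c_def field_simps)
    have "X \<le> (p - 1) / p * (c powr (p - 1)) powr (-1 / (p - 1)) * B"
      using Young[of "c powr (p - 1)"] c_pos True by simp
    then have "X \<le> X / 2" unfolding half .
    with X_pos show False by simp
  qed
  then show ?thesis using p True by simp
next
  case False
  with A have A_pos: "A > 0" by simp
  have "X \<le> B powr ((p - 1) / p) * A powr (1 / p)"
    using Young[of "(B / A) powr ((p - 1) / p)"] Young_bound_at_optimum[OF p A_pos B] A_pos B by simp
  then have "X powr p \<le> (B powr ((p - 1) / p) * A powr (1 / p)) powr p"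
    using X p by (intro powr_mono2) auto
  also have "\<dots> = A * B powr (p - 1)"
    using A_pos B p by (simp add: powr_mult powr_powr)
  finally show ?thesis .
qed

lemma set_nn_integral_Young_weighted:
  fixes f w :: "'a \<Rightarrow> real"
  assumes p: "p > 1" and \<mu>: "\<mu> > 0" and S: "S \<in> sets M"
    and f: "f \<in> borel_measurable M" and w: "w \<in> borel_measurable M"
    and f_nonneg: "\<And>x. x \<in> S \<Longrightarrow> f x \<ge> 0" and w_pos: "\<And>x. x \<in> S \<Longrightarrow> w x > 0"
  shows "(\<integral>\<^sup>+x\<in>S. ennreal (f x) \<partial>M)
    \<le> ennreal (\<mu> / p) * (\<integral>\<^sup>+x\<in>S. ennreal (f x powr p * w x) \<partial>M)
      + ennreal ((p - 1) / p * \<mu> powr (-1 / (p - 1))) * (\<integral>\<^sup>+x\<in>S. ennreal (w x powr (-1 / (p - 1))) \<partial>M)"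
proof -
  define c where "c = (p - 1) / p * \<mu> powr (-1 / (p - 1))"
  have c: "c \<ge> 0" and \<mu>p: "\<mu> / p \<ge> 0" using p \<mu> by (simp_all add: c_def)
  have "(\<integral>\<^sup>+x\<in>S. ennreal (f x) \<partial>M) \<le> (\<integral>\<^sup>+x. ennreal (\<mu> / p) * (ennreal (f x powr p * w x) * indicator S x)
      + ennreal c * (ennreal (w x powr (-1 / (p - 1))) * indicator S x) \<partial>M)"
  proof (rule nn_integral_mono)
    fix x
    show "ennreal (f x) * indicator S x \<le> ennreal (\<mu> / p) * (ennreal (f x powr p * w x) * indicator S x)
        + ennreal c * (ennreal (w x powr (-1 / (p - 1))) * indicator S x)"
    proof (cases "x \<in> S")
      case True
      have F: "0 \<le> f x powr p * w x" and W: "0 \<le> w x powr (-1 / (p - 1))"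
        using w_pos[OF True] by simp_all
      have "f x \<le> \<mu> / p * (f x powr p * w x) + c * w x powr (-1 / (p - 1))"
        using Youngs_inequality_weighted[OF p f_nonneg[OF True] w_pos[OF True] \<mu>] by (simp add: c_def)
      then have "ennreal (f x) \<le> ennreal (\<mu> / p * (f x powr p * w x) + c * w x powr (-1 / (p - 1)))"
        by (rule ennreal_leI)
      also have "\<dots> = ennreal (\<mu> / p) * ennreal (f x powr p * w x) + ennreal c * ennreal (w x powr (-1 / (p - 1)))"
        by (simp only: ennreal_plus[OF mult_nonneg_nonneg[OF \<mu>p F] mult_nonneg_nonneg[OF c W]]
            ennreal_mult[OF \<mu>p F] ennreal_mult[OF c W])
      finally show ?thesis using True by simp
    qed simp
  qed
  also have "\<dots> = ennreal (\<mu> / p) * (\<integral>\<^sup>+x\<in>S. ennreal (f x powr p * w x) \<partial>M)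
      + ennreal c * (\<integral>\<^sup>+x\<in>S. ennreal (w x powr (-1 / (p - 1))) \<partial>M)"
    using S f w by (simp add: nn_integral_add nn_integral_cmult)
  finally show ?thesis by (simp add: c_def)
qed

lemma set_nn_integral_Hoelder_weighted:
  fixes f w :: "'a \<Rightarrow> real"
  assumes p: "p > 1" and S: "S \<in> sets M"
    and f: "f \<in> borel_measurable M" and w: "w \<in> borel_measurable M"
    and f_nonneg: "\<And>x. x \<in> S \<Longrightarrow> f x \<ge> 0" and w_pos: "\<And>x. x \<in> S \<Longrightarrow> w x > 0"
    and X: "(\<integral>\<^sup>+x\<in>S. ennreal (f x) \<partial>M) = ennreal X" "X \<ge> 0"
    and B: "(\<integral>\<^sup>+x\<in>S. ennreal (w x powr (-1 / (p - 1))) \<partial>M) = ennreal B" "B > 0"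
  shows "ennreal (X powr p) \<le> (\<integral>\<^sup>+x\<in>S. ennreal (f x powr p * w x) \<partial>M) * ennreal (B powr (p - 1))"
proof (cases "\<integral>\<^sup>+x\<in>S. ennreal (f x powr p * w x) \<partial>M" rule: ennreal_cases)
  case top
  then show ?thesis using B(2) by (simp add: ennreal_top_mult)
next
  case (real A)
  have "X \<le> \<mu> / p * A + (p - 1) / p * \<mu> powr (-1 / (p - 1)) * B" if \<mu>: "\<mu> > 0" for \<mu>
  proof -
    define c where "c = (p - 1) / p * \<mu> powr (-1 / (p - 1))"
    have c: "c \<ge> 0" and \<mu>p: "\<mu> / p \<ge> 0" using p \<mu> by (simp_all add: c_def)
    have "ennreal X \<le> ennreal (\<mu> / p) * ennreal A + ennreal c * ennreal B"
      using set_nn_integral_Young_weighted[OF p \<mu> S f w f_nonneg w_pos] X(1) B(1) real(2)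
      by (simp add: c_def)
    also have "\<dots> = ennreal (\<mu> / p * A + c * B)"
      using B(2) by (simp only: ennreal_plus[OF mult_nonneg_nonneg[OF \<mu>p real(1)] mult_nonneg_nonneg[OF c]]
          ennreal_mult[OF \<mu>p real(1)] ennreal_mult[OF c])
    finally have "ennreal X \<le> ennreal (\<mu> / p * A + c * B)" .
    moreover have "0 \<le> \<mu> / p * A + c * B"
      using c \<mu>p real(1) B(2) by (intro add_nonneg_nonneg mult_nonneg_nonneg) auto
    ultimately have "X \<le> \<mu> / p * A + c * B" by (simp only: ennreal_le_iff)
    then show ?thesis by (simp add: c_def)
  qed
  then have "X powr p \<le> A * B powr (p - 1)"
    using powr_le_of_Young_bounds[OF p X(2) real(1) B(2)] by blast
  then show ?thesis
    using real B(2) by (simp add: ennreal_mult[symmetric] ennreal_leI)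
qed

lemma lebesgue_measurable_of_locally_integrable:
  fixes g :: "real \<Rightarrow> real"
  assumes a: "a > 0" and g: "\<forall>x\<in>{0<..a}. g absolutely_integrable_on {x..a}"
  shows "(\<lambda>t. indicator {0<..a} t * g t) \<in> borel_measurable lebesgue"
proof -
  define G where "G t = indicator {0<..a} t * g t" for t
  define u where "u i t = indicator {a / (real i + 2)..a} t * g t" for i t
  have u: "u i \<in> borel_measurable lebesgue" for i
  proof -
    have "a / (real i + 2) \<in> {0<..a}" using a by (auto simp: field_simps)
    then have "set_integrable lebesgue {a / (real i + 2)..a} g" using g by blast
    then show ?thesis
      unfolding u_def set_integrable_def by (simp add: borel_measurable_integrable)
  qed
  have "(\<lambda>i. u i t) \<longlonglongrightarrow> G t" for t
  proof (cases "0 < t \<and> t \<le> a")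
    case True
    have "eventually (\<lambda>i. u i t = G t) sequentially"
      unfolding eventually_sequentially
    proof (intro exI allI impI)
      fix n assume "nat \<lceil>a / t\<rceil> \<le> n"
      then have "a \<le> (real n + 2) * t" using True by (simp add: divide_le_eq algebra_simps)
      then have "a / (real n + 2) \<le> t" by (simp add: divide_le_eq mult.commute)
      then show "u n t = G t" using True by (simp add: u_def G_def indicator_def)
    qed
    then show ?thesis by (rule tendsto_eventually)
  next
    case False
    then have "u i t = 0" "G t = 0" for i using a
      by (auto simp: u_def G_def indicator_def) (smt (verit, best) divide_pos_pos of_nat_0_le_iff)
    then show ?thesis by simp
  qed
  then show ?thesis
    using borel_measurable_LIMSEQ_real[OF _ u] by (simp add: G_def)
qed

lemma borel_representative_of_locally_integrable:
  fixes g :: "real \<Rightarrow> real"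
  assumes a: "a > 0" and g: "\<forall>x\<in>{0<..a}. g absolutely_integrable_on {x..a}"
  obtains g' N where "g' \<in> borel_measurable borel" "N \<in> null_sets lborel"
    "\<And>x. x \<in> {0<..<a} - N \<Longrightarrow> g' x = g x" "\<And>x. x \<notin> {0<..<a} - N \<Longrightarrow> g' x = 0"
proof -
  obtain G where G: "G \<in> borel_measurable lborel" "AE x in lborel. indicator {0<..a} x * g x = G x"
    using completion_ex_borel_measurable_real[OF lebesgue_measurable_of_locally_integrable[OF a g]] by blast
  obtain N where N: "{x \<in> space lborel. indicator {0<..a} x * g x \<noteq> G x} \<subseteq> N"
      "emeasure lborel N = 0" "N \<in> sets lborel"
    using G(2) by (rule AE_E)
  define g' where "g' x = indicator ({0<..<a} - N) x * G x" for x
  have "g' \<in> borel_measurable borel"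
    using G(1) N(3) unfolding g'_def by measurable
  moreover have "N \<in> null_sets lborel" using N by (simp add: null_sets_def)
  moreover have "g' x = g x" if "x \<in> {0<..<a} - N" for x
  proof -
    have "x \<notin> {x \<in> space lborel. indicator {0<..a} x * g x \<noteq> G x}"
      using N(1) that by blast
    then have "indicator {0<..a} x * g x = G x" by simp
    then show ?thesis using that by (simp add: g'_def indicator_def)
  qed
  moreover have "g' x = 0" if "x \<notin> {0<..<a} - N" for x
    using that by (simp add: g'_def)
  ultimately show ?thesis using that by blast
qed

lemma borel_measurable_ennreal_mult_continuous_on_indicator:
  fixes f w :: "real \<Rightarrow> real"
  assumes f: "f \<in> borel_measurable borel" and w: "continuous_on S w" and S: "S \<in> sets borel"
  shows "(\<lambda>x. ennreal (f x * w x) * indicator S x) \<in> borel_measurable borel"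
proof -
  have "(\<lambda>x. indicator S x *\<^sub>R w x) \<in> borel_measurable borel"
    by (rule borel_measurable_continuous_on_indicator[OF S w])
  then have "(\<lambda>x. ennreal (f x * (indicator S x *\<^sub>R w x))) \<in> borel_measurable borel"
    using f by measurable
  moreover have "ennreal (f x * (indicator S x *\<^sub>R w x)) = ennreal (f x * w x) * indicator S x" for x
    by (simp add: indicator_def)
  ultimately show ?thesis by simp
qed

lemma sets_lborel_pair_less: "{(x::real, y). x < y} \<in> sets (lborel \<Otimes>\<^sub>M lborel)"
proof -
  have "open {z::real \<times> real. fst z < snd z}"
    by (intro open_Collect_less continuous_intros)
  moreover have "{(x::real, y). x < y} = {z. fst z < snd z}" by auto
  ultimately show ?thesis unfolding lborel_prod by simp
qed

lemma set_nn_integral_Ioo_le_of_Icc_le: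
  fixes f :: "real \<Rightarrow> ennreal"
  assumes f: "f \<in> borel_measurable borel"
    and bound: "\<And>x. 0 < x \<Longrightarrow> x \<le> s \<Longrightarrow> (\<integral>\<^sup>+y\<in>{x..s}. f y \<partial>lborel) \<le> C"
  shows "(\<integral>\<^sup>+y\<in>{0<..<s}. f y \<partial>lborel) \<le> C"
proof (cases "s > 0")
  case False
  then show ?thesis by simp
next
  case True
  define F where "F n y = f y * indicator {s / (real n + 2)..s} y" for n y
  have x_n: "0 < s / (real n + 2)" "s / (real n + 2) \<le> s" for n
    using True by (auto simp: field_simps)
  have inc: "incseq F"
  proof (intro incseq_SucI le_funI)
    fix n y
    have "s / (real (Suc n) + 2) \<le> s / (real n + 2)" using True by (intro divide_left_mono) auto
    then show "F n y \<le> F (Suc n) y"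
      unfolding F_def by (intro mult_left_mono) (auto simp: indicator_def)
  qed
  have meas: "F n \<in> borel_measurable lborel" for n
    unfolding F_def using f by (intro borel_measurable_times_ennreal borel_measurable_indicator) auto
  have below: "f y * indicator {0<..<s} y \<le> (SUP n. F n y)" for y
  proof (cases "y \<in> {0<..<s}")
    case True
    obtain n :: nat where "s / y \<le> real n" using real_arch_simple by blast
    then have "s \<le> (real n + 2) * y" using True by (simp add: divide_le_eq algebra_simps)
    then have "s / (real n + 2) \<le> y" by (simp add: divide_le_eq mult.commute)
    then have "F n y = f y" using True by (simp add: F_def indicator_def)
    then have "f y \<le> (SUP n. F n y)" by (metis SUP_upper UNIV_I)
    then show ?thesis using True by simp
  qed simp
  have "(\<integral>\<^sup>+y\<in>{0<..<s}. f y \<partial>lborel) \<le> (\<integral>\<^sup>+y. (SUP n. F n y) \<partial>lborel)"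
    by (intro nn_integral_mono below)
  also have "\<dots> = (SUP n. integral\<^sup>N lborel (F n))"
    by (rule nn_integral_monotone_convergence_SUP[OF inc meas])
  also have "\<dots> \<le> C"
    unfolding F_def using bound x_n by (intro SUP_least) blast
  finally show ?thesis .
qed

lemma weak_deriv_on_borel_representative:
  assumes a: "a > 0" and u: "weak_deriv_on a u g" "u a = 0"
  obtains g' where "g' \<in> borel_measurable borel"
    "\<And>t. t \<in> {0<..<a} \<Longrightarrow> g' absolutely_integrable_on {t..a}"
    "\<And>t. t \<in> {0<..<a} \<Longrightarrow> \<bar>u t\<bar> \<le> integral {t..a} (\<lambda>s. \<bar>g' s\<bar>)"
    "\<And>s. s \<in> {0<..<a} \<Longrightarrow> \<bar>g' s\<bar> \<le> \<bar>g s\<bar>"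
proof -
  have g_int: "\<forall>x\<in>{0<..a}. g absolutely_integrable_on {x..a}"
    and FTC: "\<And>x y. 0 < x \<Longrightarrow> x \<le> y \<Longrightarrow> y \<le> a \<Longrightarrow> u y - u x = integral {x..y} g"
    using u(1) by (auto simp: weak_deriv_on_def)
  obtain g' N where g': "g' \<in> borel_measurable borel" and N: "N \<in> null_sets lborel"
    and eq: "\<And>x. x \<in> {0<..<a} - N \<Longrightarrow> g' x = g x" and zero: "\<And>x. x \<notin> {0<..<a} - N \<Longrightarrow> g' x = 0"
    using borel_representative_of_locally_integrable[OF a g_int] by blast
  have "negligible N"
    using null_sets_completionI[OF N] by (simp add: negligible_iff_null_sets)
  then have negl: "negligible (N \<union> {a})" by (intro negligible_Un) auto
  have spike: "g' x = g x" if "t \<in> {0<..<a}" "x \<in> {t..a} - (N \<union> {a})" for t x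
    using that by (intro eq) auto
  have g'_int: "g' absolutely_integrable_on {t..a}" if t: "t \<in> {0<..<a}" for t
    by (rule absolutely_integrable_spike[OF _ negl, where f = g]) (use g_int t spike[OF t] in auto)
  have u_le: "\<bar>u t\<bar> \<le> integral {t..a} (\<lambda>s. \<bar>g' s\<bar>)" if t: "t \<in> {0<..<a}" for t
  proof -
    have "integral {t..a} g = integral {t..a} g'"
      by (rule integral_spike[OF negl]) (use spike[OF t] in auto)
    then have "\<bar>u t\<bar> = norm (integral {t..a} g')"
      using FTC[of t a] t u(2) by simp
    also have "\<dots> \<le> integral {t..a} (\<lambda>s. \<bar>g' s\<bar>)"
      using g'_int[OF t] by (intro integral_norm_bound_integral) (auto simp: absolutely_integrable_on_def)
    finally show ?thesis .
  qed
  have "\<bar>g' s\<bar> \<le> \<bar>g s\<bar>" if "s \<in> {0<..<a}" for s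
    using eq[of s] zero[of s] that by (cases "s \<in> N") auto
  with g' g'_int u_le show ?thesis by (rule that)
qed

lemma powr_has_integral_Icc:
  fixes e t a :: real
  assumes e: "e > 0" and t: "0 < t" "t \<le> a"
  shows "((\<lambda>s. s powr (-1 - e)) has_integral (t powr (-e) - a powr (-e)) / e) {t..a}"
proof -
  define F where "F s = - (s powr (-e)) / e" for s
  have "((\<lambda>s. s powr (-1 - e)) has_integral F a - F t) {t..a}"
  proof (rule fundamental_theorem_of_calculus[OF t(2)])
    fix x assume "x \<in> {t..a}"
    then have "x > 0" using t by auto
    then have "(F has_real_derivative - ((-e) * x powr (-e - 1)) / e) (at x)"
      unfolding F_def[abs_def] by (auto intro!: derivative_eq_intros)
    moreover have "x powr (-e - 1) = x powr (-1 - e)"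
      by (rule arg_cong[where f = "\<lambda>y. x powr y"]) simp
    then have "- ((-e) * x powr (-e - 1)) / e = x powr (-1 - e)"
      using e by simp
    ultimately have "(F has_real_derivative x powr (-1 - e)) (at x)" by simp
    then show "(F has_vector_derivative x powr (-1 - e)) (at x within {t..a})"
      by (simp add: has_real_derivative_iff_has_vector_derivative[symmetric] has_field_derivative_at_within)
  qed
  then show ?thesis by (simp add: F_def diff_divide_distrib)
qed

section \<open>The weight and its turning point\<close>

definition turning_point :: "(real \<Rightarrow> real) \<Rightarrow> real \<Rightarrow> real \<Rightarrow> bool" where
  "turning_point f a T \<longleftrightarrow> T \<in> {0<..<a} \<and>
     (\<forall>t\<in>{0<..<T}. \<exists>d. (f has_real_derivative d) (at t) \<and> d < 0) \<and>
     (\<forall>t\<in>{T<..<a}. \<exists>d. (f has_real_derivative d) (at t) \<and> d > 0)"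

lemma turning_point_unique:
  assumes "turning_point f a S" and "turning_point f a T"
  shows "S = T"
proof (rule ccontr)
  let ?m = "(S + T) / 2"
  assume "S \<noteq> T"
  then have "(?m \<in> {0<..<S} \<and> ?m \<in> {T<..<a}) \<or> (?m \<in> {0<..<T} \<and> ?m \<in> {S<..<a})"
    using assms by (auto simp: turning_point_def)
  then obtain d1 d2 where "(f has_real_derivative d1) (at ?m)" "d1 < 0"
      "(f has_real_derivative d2) (at ?m)" "d2 > 0"
    using assms unfolding turning_point_def by blast
  then show False using DERIV_unique by force
qed

locale weighted_hardy =
  fixes a p c1 c2 \<delta> :: real and \<phi> \<phi>' :: "real \<Rightarrow> real"
  assumes a_pos: "a > 0" and p_gt: "p > 1"
    and phi_cont: "continuous_on {0..a} \<phi>"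
    and phi_C1: "\<forall>t\<in>{0<..a}. (\<phi> has_real_derivative \<phi>' t) (at t within {0<..a})"
    and phi'_cont: "continuous_on {0<..a} \<phi>'"
    and phi_pos: "\<forall>t\<in>{0<..a}. \<phi> t > 0"
    and cpos: "c1 > 0" "c2 > 0" "\<delta> > 0"
    and bounds: "\<forall>t\<in>{0<..a}. c1 * t powr (p - 1 + \<delta>) \<le> \<phi> t \<and> \<phi> t \<le> c2 * t powr (p - 1 + \<delta>)"
    and logconc: "\<forall>t\<in>{0<..<a}. \<exists>d. ((\<lambda>s. \<phi>' s / \<phi> s) has_real_derivative d) (at t) \<and> d < 0"
begin

definition "q = 1 / (p - 1)"
definition "\<epsilon> = \<delta> / (p - 1)"
definition "\<psi> t = \<phi> t powr (-1 / (p - 1))"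
definition "I t = integral {t..a} \<psi>"
definition "\<eta> t = \<psi> t / I t"

lemma eta_a_eq: "eta_a \<phi> p a = \<eta>"
  by (rule ext) (simp add: eta_a_def \<eta>_def I_def \<psi>_def[abs_def])

lemma q_pos: "q > 0" and eps_pos: "\<epsilon> > 0"
  using p_gt cpos by (simp_all add: q_def \<epsilon>_def)

lemma psi_eq: "\<psi> t = \<phi> t powr (-q)"
  by (simp add: \<psi>_def q_def)

lemma psi_pos: "t \<in> {0<..a} \<Longrightarrow> \<psi> t > 0"
  using phi_pos by (force simp: \<psi>_def)

lemma phi_cont_on: "continuous_on {0<..a} \<phi>"
  using phi_cont by (rule continuous_on_subset) auto

lemma psi_cont: "continuous_on {0<..a} \<psi>"
  unfolding \<psi>_def using phi_pos
  by (intro continuous_on_powr phi_cont_on continuous_on_const) auto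

lemma psi_integrable: "0 < x \<Longrightarrow> \<psi> integrable_on {x..a}"
  by (intro integrable_continuous_interval continuous_on_subset[OF psi_cont]) auto

lemma phi_deriv: "t \<in> {0<..<a} \<Longrightarrow> (\<phi> has_real_derivative \<phi>' t) (at t)"
proof -
  assume t: "t \<in> {0<..<a}"
  then have "t \<in> {0<..a}" by simp
  then have "(\<phi> has_real_derivative \<phi>' t) (at t within {0<..<a})"
    by (rule has_field_derivative_subset[OF phi_C1[rule_format]]) auto
  moreover have "at t within {0<..<a} = at t"
    using t by (intro at_within_open) auto
  ultimately show ?thesis by simp
qed

lemma psi_deriv: "t \<in> {0<..<a} \<Longrightarrow> (\<psi> has_real_derivative - q * \<psi> t * \<phi>' t / \<phi> t) (at t)"
proof -
  assume t: "t \<in> {0<..<a}"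
  have pos: "\<phi> t > 0" using phi_pos t by auto
  have "((\<lambda>x. \<phi> x powr (-q)) has_real_derivative (-q) * \<phi> t powr (-q - of_nat 1) * \<phi>' t) (at t)"
    by (rule DERIV_fun_powr[OF phi_deriv[OF t] pos])
  moreover have "(-q) * \<phi> t powr (-q - of_nat 1) * \<phi>' t = - q * \<psi> t * \<phi>' t / \<phi> t"
    using pos by (simp add: psi_eq powr_diff)
  ultimately show ?thesis by (simp add: psi_eq[abs_def])
qed

lemma I_deriv_within: "0 < c \<Longrightarrow> t \<in> {c..a} \<Longrightarrow> (I has_real_derivative - \<psi> t) (at t within {c..a})"
  unfolding I_def[abs_def]
  by (intro integral_has_real_derivative' continuous_on_subset[OF psi_cont]) auto

lemma I_deriv: "t \<in> {0<..<a} \<Longrightarrow> (I has_real_derivative - \<psi> t) (at t)"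
  using I_deriv_within[of "t / 2" t] at_within_interior[of t "{t / 2..a}"] by auto

lemma I_powr_deriv:
  "t \<in> {0<..<a} \<Longrightarrow> I t > 0 \<Longrightarrow> ((\<lambda>s. I s powr b) has_real_derivative b * I t powr (b - 1) * - \<psi> t) (at t)"
  using DERIV_fun_powr[OF I_deriv] by simp

lemma I_cont_on: "0 < c \<Longrightarrow> continuous_on {c..a} I"
  unfolding continuous_on_eq_continuous_within
  using I_deriv_within DERIV_continuous by blast

lemma I_cont: "continuous_on {0<..a} I"
proof (clarsimp simp: continuous_on_eq_continuous_within)
  fix t assume t: "0 < t" "t \<le> a"
  have "continuous (at t within {t / 2..a}) I"
    using I_cont_on[of "t / 2"] t by (simp add: continuous_on_eq_continuous_within)
  moreover have "at t within {t / 2..a} = at t within {0<..a}"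
    using t by (intro at_within_nhd[of _ "{t / 2<..}"]) auto
  ultimately show "continuous (at t within {0<..a}) I" by (simp add: continuous_within)
qed

lemma I_a: "I a = 0"
  by (simp add: I_def)

lemma I_antimono: "0 < s \<Longrightarrow> s \<le> t \<Longrightarrow> t \<le> a \<Longrightarrow> I t \<le> I s"
proof -
  assume st: "0 < s" "s \<le> t" "t \<le> a"
  have "integral {s..t} \<psi> + integral {t..a} \<psi> = integral {s..a} \<psi>"
    using st by (intro Henstock_Kurzweil_Integration.integral_combine psi_integrable) auto
  moreover have "integral {s..t} \<psi> \<ge> 0"
    using st psi_pos by (intro integral_nonneg integrable_on_subinterval[OF psi_integrable[of s]])
      (auto intro: less_imp_le)
  ultimately show ?thesis by (simp add: I_def)
qed

lemma psi_bounds: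
  assumes "s \<in> {0<..a}"
  shows "c2 powr (-q) * s powr (-1 - \<epsilon>) \<le> \<psi> s \<and> \<psi> s \<le> c1 powr (-q) * s powr (-1 - \<epsilon>)"
proof -
  let ?g = "p - 1 + \<delta>"
  have s: "s > 0" "c1 * s powr ?g \<le> \<phi> s" "\<phi> s \<le> c2 * s powr ?g" "\<phi> s > 0"
    using assms bounds phi_pos by auto
  have exp: "?g * q = 1 + \<epsilon>"
    using p_gt by (simp add: q_def \<epsilon>_def field_simps)
  have "(c2 * s powr ?g) powr (-q) \<le> \<psi> s" "\<psi> s \<le> (c1 * s powr ?g) powr (-q)"
    unfolding psi_eq using s cpos q_pos by (auto intro!: powr_mono2')
  moreover have "(c * s powr ?g) powr (-q) = c powr (-q) * s powr (-1 - \<epsilon>)" if "c > 0" for c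
    using that s(1) by (simp add: powr_mult powr_powr exp)
  ultimately show ?thesis using cpos by simp
qed

lemma I_bounds:
  assumes "t \<in> {0<..a}"
  shows "c2 powr (-q) * ((t powr (-\<epsilon>) - a powr (-\<epsilon>)) / \<epsilon>) \<le> I t
    \<and> I t \<le> c1 powr (-q) * ((t powr (-\<epsilon>) - a powr (-\<epsilon>)) / \<epsilon>)"
proof -
  have pw: "((\<lambda>s. s powr (-1 - \<epsilon>)) has_integral (t powr (-\<epsilon>) - a powr (-\<epsilon>)) / \<epsilon>) {t..a}"
    using assms powr_has_integral_Icc[OF eps_pos] by auto
  have I: "(\<psi> has_integral I t) {t..a}"
    unfolding I_def using assms psi_integrable by auto
  have "c2 powr (-q) * ((t powr (-\<epsilon>) - a powr (-\<epsilon>)) / \<epsilon>) \<le> I t"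
    by (rule has_integral_le[OF has_integral_mult_right[OF pw] I]) (use psi_bounds assms in auto)
  moreover have "I t \<le> c1 powr (-q) * ((t powr (-\<epsilon>) - a powr (-\<epsilon>)) / \<epsilon>)"
    by (rule has_integral_le[OF I has_integral_mult_right[OF pw]]) (use psi_bounds assms in auto)
  ultimately show ?thesis by simp
qed

lemma I_pos: "t \<in> {0<..<a} \<Longrightarrow> I t > 0"
proof -
  assume t: "t \<in> {0<..<a}"
  have "a powr (-\<epsilon>) < t powr (-\<epsilon>)"
    using t eps_pos by (intro powr_less_mono2_neg) auto
  then have "c2 powr (-q) * ((t powr (-\<epsilon>) - a powr (-\<epsilon>)) / \<epsilon>) > 0"
    using cpos eps_pos by simp
  with I_bounds[of t] t show ?thesis by auto
qed

lemma I_nonneg: "t \<in> {0<..a} \<Longrightarrow> I t \<ge> 0"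
  using I_pos[of t] I_a by (cases "t = a") auto

lemma I_powr_cont_on: "0 < c \<Longrightarrow> b > 0 \<Longrightarrow> continuous_on {c..a} (\<lambda>s. I s powr b)"
  using I_nonneg by (intro continuous_on_powr' I_cont_on continuous_on_const) auto

lemma I_powr_has_integral:
  assumes "0 < x" "x \<le> y" "y \<le> a" "e > 0"
  shows "((\<lambda>t. I t powr (e - 1) * \<psi> t) has_integral (I x powr e - I y powr e) / e) {x<..<y}"
proof -
  define F where "F t = - (I t powr e / e)" for t
  have "((\<lambda>t. I t powr (e - 1) * \<psi> t) has_integral F y - F x) {x..y}"
  proof (rule fundamental_theorem_of_calculus_interior)
    show "continuous_on {x..y} F"
      unfolding F_def[abs_def] using assms
      by (intro continuous_intros continuous_on_subset[OF I_powr_cont_on[of x e]]) auto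
  next
    fix t assume "t \<in> {x<..<y}"
    then have t: "t \<in> {0<..<a}" using assms by auto
    have "(F has_real_derivative - (e * I t powr (e - 1) * - \<psi> t / e)) (at t)"
      unfolding F_def[abs_def] by (intro DERIV_minus DERIV_cdivide I_powr_deriv t I_pos)
    then show "(F has_vector_derivative I t powr (e - 1) * \<psi> t) (at t)"
      using assms by (simp add: has_real_derivative_iff_has_vector_derivative)
  qed (use assms in simp)
  then show ?thesis
    by (simp add: F_def has_integral_Icc_iff_Ioo diff_divide_distrib)
qed

lemma I_powr_mult_psi_nonneg: "t \<in> {0<..a} \<Longrightarrow> 0 \<le> I t powr b * \<psi> t"
  using psi_pos[of t] by simp

definition "h t = - q * (\<phi>' t / \<phi> t) * I t + \<psi> t"

lemma eta_deriv: "t \<in> {0<..<a} \<Longrightarrow> (\<eta> has_real_derivative \<psi> t * h t / (I t)\<^sup>2) (at t)"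
proof -
  assume t: "t \<in> {0<..<a}"
  have "(\<eta> has_real_derivative ((- q * \<psi> t * \<phi>' t / \<phi> t) * I t - \<psi> t * - \<psi> t) / (I t * I t)) (at t)"
    unfolding \<eta>_def[abs_def] using I_pos[OF t] by (intro DERIV_divide psi_deriv I_deriv t) auto
  then show ?thesis
    by (simp add: h_def power2_eq_square algebra_simps)
qed

lemma eta_deriv_sign_iff:
  assumes "t \<in> {0<..<a}"
  shows "\<psi> t * h t / (I t)\<^sup>2 < 0 \<longleftrightarrow> h t < 0" and "\<psi> t * h t / (I t)\<^sup>2 > 0 \<longleftrightarrow> h t > 0"
  using psi_pos[of t] I_pos[of t] assms
  by (simp_all add: divide_less_0_iff zero_less_divide_iff zero_less_mult_iff mult_less_0_iff)

lemma h_deriv_pos: "t \<in> {0<..<a} \<Longrightarrow> \<exists>D. (h has_real_derivative D) (at t) \<and> D > 0"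
proof -
  assume t: "t \<in> {0<..<a}"
  obtain d where d: "((\<lambda>s. \<phi>' s / \<phi> s) has_real_derivative d) (at t)" "d < 0"
    using logconc t by blast
  have "(h has_real_derivative - q * (d * I t + \<phi>' t / \<phi> t * - \<psi> t) + - q * \<psi> t * \<phi>' t / \<phi> t) (at t)"
    unfolding h_def[abs_def]
    using DERIV_add[OF DERIV_cmult[OF DERIV_mult[OF d(1) I_deriv[OF t]], of "-q"] psi_deriv[OF t]]
    by (simp add: algebra_simps)
  moreover have "- q * (d * I t + \<phi>' t / \<phi> t * - \<psi> t) + - q * \<psi> t * \<phi>' t / \<phi> t = - q * d * I t"
    by (simp add: algebra_simps)
  moreover have "- q * d * I t > 0"
    using q_pos d(2) I_pos[OF t] by (simp add: mult_neg_pos mult_pos_neg)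
  ultimately show ?thesis by auto
qed

lemma h_strict_mono: "0 < s \<Longrightarrow> s < t \<Longrightarrow> t < a \<Longrightarrow> h s < h t"
  by (rule DERIV_pos_imp_increasing) (use h_deriv_pos in auto)

lemma h_cont: "continuous_on {0<..a} h"
  unfolding h_def[abs_def] using phi_pos
  by (intro continuous_intros phi'_cont phi_cont_on I_cont psi_cont) auto

lemma h_pos_somewhere: "\<exists>t\<in>{0<..<a}. h t > 0"
proof -
  have "(h \<longlongrightarrow> h a) (at a within {0<..a})"
    using h_cont a_pos by (simp add: continuous_on_eq_continuous_within continuous_within)
  moreover have "h a > 0" using psi_pos[of a] a_pos by (simp add: h_def I_a)
  ultimately have "eventually (\<lambda>x. h x > 0) (at a within {0<..a})"
    by (rule order_tendstoD)
  then obtain d where d: "d > 0" "\<And>x. x \<in> {0<..a} \<Longrightarrow> x \<noteq> a \<Longrightarrow> dist x a < d \<Longrightarrow> h x > 0"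
    by (auto simp: eventually_at)
  let ?x = "max (a / 2) (a - d / 2)"
  have "?x \<in> {0<..<a}" and "h ?x > 0"
    using a_pos d by (auto intro!: d(2) simp: dist_real_def)
  then show ?thesis by blast
qed

lemma eta_lower_bound: "0 < t \<Longrightarrow> t < a \<Longrightarrow> c2 powr (-q) * \<epsilon> / (c1 powr (-q) * t) \<le> \<eta> t"
proof -
  assume t: "0 < t" "t < a"
  define A B where "A = c2 powr (-q)" and "B = c1 powr (-q)"
  have AB: "A > 0" "B > 0" using cpos by (simp_all add: A_def B_def)
  have psi: "A * t powr (-1 - \<epsilon>) \<le> \<psi> t" using psi_bounds[of t] t by (auto simp: A_def)
  have "I t \<le> B * ((t powr (-\<epsilon>) - a powr (-\<epsilon>)) / \<epsilon>)" using I_bounds[of t] t by (auto simp: B_def)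
  also have "\<dots> \<le> B * (t powr (-\<epsilon>) / \<epsilon>)"
    using AB eps_pos by (intro mult_left_mono divide_right_mono) auto
  finally have I: "I t \<le> B * (t powr (-\<epsilon>) / \<epsilon>)" .
  have "-1 - \<epsilon> = -\<epsilon> - 1" by simp
  then have "t powr (-1 - \<epsilon>) = t powr (-\<epsilon>) / t"
    using t by (simp only: powr_diff) simp
  then have "A * \<epsilon> / (B * t) = (A * t powr (-1 - \<epsilon>)) / (B * (t powr (-\<epsilon>) / \<epsilon>))"
    using t eps_pos AB by (simp add: field_simps)
  also have "\<dots> \<le> \<psi> t / I t"
    using psi I I_pos[of t] AB t psi_pos[of t] by (intro frac_le) auto
  finally show ?thesis by (simp add: \<eta>_def A_def B_def)
qed

lemma h_neg_somewhere: "\<exists>t\<in>{0<..<a}. h t < 0"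
proof (rule ccontr)
  assume "\<not> (\<exists>t\<in>{0<..<a}. h t < 0)"
  then have h_nonneg: "h t \<ge> 0" if "t \<in> {0<..<a}" for t
    using that by (meson not_le)
  let ?N = "\<eta> (a / 2)"
  have mono: "\<eta> t \<le> ?N" if t: "0 < t" "t \<le> a / 2" for t
  proof (rule DERIV_nonneg_imp_nondecreasing[OF t(2)])
    fix x assume "t \<le> x" "x \<le> a / 2"
    then have x: "x \<in> {0<..<a}" using t a_pos by auto
    then have "\<psi> x * h x / (I x)\<^sup>2 \<ge> 0" using psi_pos[of x] h_nonneg[OF x] by auto
    then show "\<exists>y. (\<eta> has_real_derivative y) (at x) \<and> 0 \<le> y" using eta_deriv[OF x] by blast
  qed
  define C where "C = c2 powr (-q) * \<epsilon> / c1 powr (-q)"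
  have C: "C > 0" using cpos eps_pos by (simp add: C_def)
  define t where "t = min (a / 2) (C / (\<bar>?N\<bar> + 1))"
  have t: "0 < t" "t \<le> a / 2"
    using a_pos C unfolding t_def by (simp_all only: min.cobounded1) simp
  have "t \<le> C / (\<bar>?N\<bar> + 1)" by (simp add: t_def)
  then have "t * (\<bar>?N\<bar> + 1) \<le> C"
    by (simp add: le_divide_eq add_pos_nonneg)
  then have "\<bar>?N\<bar> + 1 \<le> C / t"
    using t(1) by (simp add: le_divide_eq mult.commute)
  also have "\<dots> \<le> \<eta> t" using eta_lower_bound[of t] t a_pos by (simp add: C_def)
  also have "\<dots> \<le> ?N" using mono[OF t] .
  finally show False by linarith
qed

lemma h_has_zero: "\<exists>T\<in>{0<..<a}. h T = 0"
proof -
  obtain t0 t1 where t0: "t0 \<in> {0<..<a}" "h t0 < 0" and t1: "t1 \<in> {0<..<a}" "h t1 > 0"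
    using h_neg_somewhere h_pos_somewhere by blast
  have "t0 < t1"
  proof (rule ccontr)
    assume "\<not> t0 < t1"
    then have "h t1 \<le> h t0" using h_strict_mono[of t1 t0] t0 t1 by (cases "t1 = t0") auto
    with t0 t1 show False by simp
  qed
  moreover have "continuous_on {t0..t1} h"
    by (rule continuous_on_subset[OF h_cont]) (use t0 t1 in auto)
  ultimately obtain T where "T \<ge> t0" "T \<le> t1" "h T = 0"
    using IVT'[of h t0 0 t1] t0 t1 by auto
  then show ?thesis using t0 t1 by auto
qed

lemma turning_point_eta: "\<exists>!T. turning_point \<eta> a T"
proof -
  obtain T where T: "T \<in> {0<..<a}" "h T = 0" using h_has_zero by blast
  have "turning_point \<eta> a T"
    unfolding turning_point_def
  proof (intro conjI ballI)
    fix t assume t: "t \<in> {0<..<T}"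
    then have "h t < 0" and t': "t \<in> {0<..<a}" using h_strict_mono[of t T] T by auto
    then show "\<exists>d. (\<eta> has_real_derivative d) (at t) \<and> d < 0"
      using eta_deriv[OF t'] eta_deriv_sign_iff[OF t'] by blast
  next
    fix t assume t: "t \<in> {T<..<a}"
    then have "h t > 0" and t': "t \<in> {0<..<a}" using h_strict_mono[of T t] T by auto
    then show "\<exists>d. (\<eta> has_real_derivative d) (at t) \<and> d > 0"
      using eta_deriv[OF t'] eta_deriv_sign_iff[OF t'] by blast
  qed (use T in simp)
  then show ?thesis using turning_point_unique by blast
qed

section \<open>The Hardy inequality\<close>

definition "r = (p - 1) / p"

lemma r_pos: "r > 0"
  using p_gt by (simp add: r_def)

lemma eta_pos: "t \<in> {0<..<a} \<Longrightarrow> \<eta> t > 0"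
  using psi_pos[of t] I_pos[of t] by (simp add: \<eta>_def)

lemma eta_isCont: "t \<in> {0<..<a} \<Longrightarrow> isCont \<eta> t"
  by (rule DERIV_isCont[OF eta_deriv])

lemma eta_aT_le_eta:
  assumes T: "turning_point \<eta> a T" and t: "t \<in> {0<..<a}"
  shows "0 \<le> eta_aT \<phi> p a T t \<and> eta_aT \<phi> p a T t \<le> \<eta> t"
proof (cases "t \<le> T")
  case True
  then show ?thesis using eta_pos[OF t] by (simp add: eta_aT_def eta_a_eq)
next
  case False
  have T_in: "T \<in> {0<..<a}" using T by (simp add: turning_point_def)
  have incr: "\<forall>x\<in>{T<..<a}. \<exists>y. (\<eta> has_real_derivative y) (at x) \<and> 0 < y"
    using T by (simp add: turning_point_def)
  have "continuous_on {T..t} \<eta>"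
    using T_in t by (intro continuous_at_imp_continuous_on ballI eta_isCont) auto
  moreover have "\<exists>y. (\<eta> has_real_derivative y) (at x) \<and> 0 < y" if "T < x" "x < t" for x
    using incr that t by auto
  ultimately have "\<eta> T < \<eta> t"
    using False by (metis DERIV_pos_imp_increasing_open not_le)
  then show ?thesis using False eta_pos[of T] T_in by (simp add: eta_aT_def eta_a_eq)
qed

lemma psi_powr_mult_phi: "t \<in> {0<..a} \<Longrightarrow> \<psi> t powr p * \<phi> t = \<psi> t"
proof -
  assume t: "t \<in> {0<..a}"
  then have \<phi>: "\<phi> t > 0" using phi_pos by auto
  have "\<psi> t powr p * \<phi> t = \<phi> t powr (-1 / (p - 1) * p) * \<phi> t powr 1"
    using \<phi> by (simp add: \<psi>_def powr_powr)
  also have "\<dots> = \<phi> t powr (-1 / (p - 1) * p + 1)"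
    by (simp only: powr_add)
  also have "-1 / (p - 1) * p + 1 = -1 / (p - 1)"
    using p_gt by (simp add: field_simps)
  finally show ?thesis by (simp add: \<psi>_def)
qed

lemma eta_powr_mult_phi: "t \<in> {0<..<a} \<Longrightarrow> \<eta> t powr p * \<phi> t = \<psi> t * I t powr (-p)"
proof -
  assume t: "t \<in> {0<..<a}"
  then have "\<eta> t powr p = \<psi> t powr p / I t powr p"
    using I_pos[OF t] psi_pos[of t] by (simp add: \<eta>_def powr_divide)
  then have "\<eta> t powr p * \<phi> t = \<psi> t / I t powr p"
    using psi_powr_mult_phi[of t] t by simp
  then show ?thesis
    by (simp add: powr_minus_divide)
qed

definition "k t = r powr (1 - p) * \<psi> t * I t powr (-1 - r)"

lemma k_cont: "continuous_on {0<..<a} k"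
proof -
  have "continuous_on {0<..<a} \<psi>" "continuous_on {0<..<a} I"
    by (auto intro: continuous_on_subset[OF psi_cont] continuous_on_subset[OF I_cont])
  then show ?thesis
    unfolding k_def[abs_def] using I_pos by (intro continuous_intros) force+
qed

lemma k_has_integral:
  assumes "0 < x" "x \<le> s" "s < a"
  shows "(k has_integral r powr (-p) * (I s powr (-r) - I x powr (-r))) {x..s}"
proof -
  define F where "F t = r powr (-p) * I t powr (-r)" for t
  have "(k has_integral F s - F x) {x..s}"
  proof (rule fundamental_theorem_of_calculus[OF assms(2)])
    fix t assume "t \<in> {x..s}"
    then have t: "t \<in> {0<..<a}" using assms by auto
    have "(F has_real_derivative r powr (-p) * (-r * I t powr (-r - 1) * - \<psi> t)) (at t)"
      unfolding F_def[abs_def] by (intro DERIV_cmult I_powr_deriv t I_pos)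
    moreover have "r powr (-p) * (-r * I t powr (-r - 1) * - \<psi> t) = k t"
    proof -
      have "r powr (-p) * r = r powr (1 - p)"
        using r_pos powr_add[of r "-p" 1] by simp
      moreover have "-r - 1 = -1 - r" by simp
      moreover have "r powr (-p) * (-r * I t powr (-r - 1) * - \<psi> t) = (r powr (-p) * r) * \<psi> t * I t powr (-r - 1)"
        by (simp add: algebra_simps)
      ultimately show ?thesis by (simp only: k_def)
    qed
    ultimately show "(F has_vector_derivative k t) (at t within {x..s})"
      by (simp add: has_real_derivative_iff_has_vector_derivative[symmetric] has_field_derivative_at_within)
  qed
  then show ?thesis by (simp add: F_def algebra_simps)
qed

lemma k_indicator_measurable: "(\<lambda>t. ennreal (k t) * indicator {0<..<a} t) \<in> borel_measurable borel"
  using borel_measurable_ennreal_mult_continuous_on_indicator[of "\<lambda>_. 1", OF _ k_cont] by simp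

lemma set_nn_integral_k_le:
  assumes s: "s \<in> {0<..<a}"
  shows "(\<integral>\<^sup>+t\<in>{0<..<s}. ennreal (k t) \<partial>lborel) \<le> ennreal (r powr (-p) * I s powr (-r))"
proof -
  have "(\<integral>\<^sup>+t\<in>{0<..<s}. ennreal (k t) * indicator {0<..<a} t \<partial>lborel) \<le> ennreal (r powr (-p) * I s powr (-r))"
  proof (rule set_nn_integral_Ioo_le_of_Icc_le[OF k_indicator_measurable])
    fix x assume x: "0 < x" "x \<le> s"
    have k_nonneg: "t \<in> {x..s} \<Longrightarrow> k t \<ge> 0" for t
      using psi_pos[of t] x s r_pos by (simp add: k_def)
    have "(\<integral>\<^sup>+t\<in>{x..s}. ennreal (k t) * indicator {0<..<a} t \<partial>lborel)
        = (\<integral>\<^sup>+t\<in>{x..s}. ennreal (k t) \<partial>lborel)"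
      using x s by (intro nn_integral_cong) (auto simp: indicator_def)
    also have "\<dots> = ennreal (r powr (-p) * (I s powr (-r) - I x powr (-r)))"
      using k_nonneg k_has_integral[of x s] x s by (intro nn_integral_has_integral_lebesgue') auto
    also have "\<dots> \<le> ennreal (r powr (-p) * I s powr (-r))"
      by (intro ennreal_leI mult_left_mono) auto
    finally show "(\<integral>\<^sup>+t\<in>{x..s}. ennreal (k t) * indicator {0<..<a} t \<partial>lborel) \<le> ennreal (r powr (-p) * I s powr (-r))" .
  qed
  also have "(\<integral>\<^sup>+t\<in>{0<..<s}. ennreal (k t) * indicator {0<..<a} t \<partial>lborel) = (\<integral>\<^sup>+t\<in>{0<..<s}. ennreal (k t) \<partial>lborel)"
    using s by (intro nn_integral_cong) (auto simp: indicator_def)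
  finally show ?thesis .
qed

lemma k_eq: "t \<in> {0<..<a} \<Longrightarrow> (I t powr r / r) powr (p - 1) * (\<psi> t * I t powr (-p)) = k t"
proof -
  assume t: "t \<in> {0<..<a}"
  define x where "x = I t"
  have x: "x > 0" using I_pos[OF t] by (simp add: x_def)
  have exp: "r * (p - 1) + -p = -1 - r"
    using p_gt by (simp add: r_def field_simps)
  have "(x powr r / r) powr (p - 1) * x powr (-p) = (x powr (r * (p - 1)) * x powr (-p)) * (1 / r powr (p - 1))"
    using x r_pos by (simp add: powr_divide powr_powr)
  also have "x powr (r * (p - 1)) * x powr (-p) = x powr (-1 - r)"
    by (simp only: powr_add[symmetric] exp)
  also have "1 / r powr (p - 1) = r powr (1 - p)"
    using r_pos by (simp add: powr_minus_divide[symmetric])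
  finally have "(x powr r / r) powr (p - 1) * x powr (-p) = r powr (1 - p) * x powr (-1 - r)"
    by (simp add: mult.commute)
  then show ?thesis by (simp add: k_def x_def algebra_simps)
qed

lemma set_nn_integral_dual_weight:
  assumes t: "t \<in> {0<..<a}"
  shows "(\<integral>\<^sup>+s\<in>{t<..<a}. ennreal ((\<phi> s * I s powr r) powr (-1 / (p - 1))) \<partial>lborel) = ennreal (I t powr r / r)"
proof -
  have exp: "- (r / (p - 1)) = r - 1" using p_gt by (simp add: r_def field_simps)
  have "(\<integral>\<^sup>+s\<in>{t<..<a}. ennreal ((\<phi> s * I s powr r) powr (-1 / (p - 1))) \<partial>lborel)
      = (\<integral>\<^sup>+s\<in>{t<..<a}. ennreal (I s powr (r - 1) * \<psi> s) \<partial>lborel)"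
  proof (intro nn_integral_cong)
    fix s
    show "ennreal ((\<phi> s * I s powr r) powr (-1 / (p - 1))) * indicator {t<..<a} s
      = ennreal (I s powr (r - 1) * \<psi> s) * indicator {t<..<a} s"
    proof (cases "s \<in> {t<..<a}")
      case True
      then have "\<phi> s > 0" "I s > 0" using t phi_pos I_pos by auto
      then show ?thesis
        using True by (simp add: \<psi>_def powr_mult powr_powr exp mult.commute)
    qed simp
  qed
  also have "\<dots> = ennreal (I t powr r / r)"
  proof (rule nn_integral_has_integral_lebesgue')
    show "((\<lambda>s. I s powr (r - 1) * \<psi> s) has_integral I t powr r / r) {t<..<a}"
      using I_powr_has_integral[of t a r] t r_pos by (simp add: I_a)
  qed (use t in \<open>auto intro!: I_powr_mult_psi_nonneg\<close>)
  finally show ?thesis .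
qed

lemma pointwise_Hardy_bound:
  fixes g u :: "real \<Rightarrow> real"
  assumes t: "t \<in> {0<..<a}" and g: "g \<in> borel_measurable borel" "g absolutely_integrable_on {t..a}"
    and u: "\<bar>u t\<bar> \<le> integral {t..a} (\<lambda>s. \<bar>g s\<bar>)"
  shows "ennreal (\<bar>u t\<bar> powr p * \<eta> t powr p * \<phi> t)
    \<le> ennreal (k t) * (\<integral>\<^sup>+s\<in>{t<..<a}. ennreal (\<bar>g s\<bar> powr p * (\<phi> s * I s powr r)) \<partial>lborel)"
    (is "_ \<le> _ * ?\<Phi>")
proof -
  define S where "S = {t<..<a}"
  define w where "w s = indicator S s * (\<phi> s * I s powr r)" for s
  have S: "S \<subseteq> {0<..<a}" "S \<in> sets borel" using t by (auto simp: S_def)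
  have w_pos: "w s > 0" if "s \<in> S" for s
    using that S phi_pos I_pos by (force simp: w_def)
  have w_cont: "continuous_on S (\<lambda>s. \<phi> s * I s powr r)"
    using S I_pos by (intro continuous_intros continuous_on_subset[OF phi_cont_on]
        continuous_on_subset[OF I_cont]) force+
  have w_meas: "w \<in> borel_measurable lborel"
    using borel_measurable_continuous_on_indicator[OF S(2) w_cont] by (simp add: w_def[abs_def])
  define X where "X = integral {t..a} (\<lambda>s. \<bar>g s\<bar>)"
  have "((\<lambda>s. \<bar>g s\<bar>) has_integral X) S"
    using g(2) unfolding X_def S_def has_integral_Icc_iff_Ioo[symmetric]
    by (simp add: absolutely_integrable_on_def has_integral_integral)
  then have X: "(\<integral>\<^sup>+s\<in>S. ennreal \<bar>g s\<bar> \<partial>lborel) = ennreal X"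
    by (intro nn_integral_has_integral_lebesgue') auto
  have "X \<ge> 0" using u by (simp add: X_def)
  have "(\<integral>\<^sup>+s\<in>S. ennreal (w s powr (-1 / (p - 1))) \<partial>lborel)
      = (\<integral>\<^sup>+s\<in>S. ennreal ((\<phi> s * I s powr r) powr (-1 / (p - 1))) \<partial>lborel)"
    by (intro nn_integral_cong) (simp add: w_def indicator_def)
  then have B: "(\<integral>\<^sup>+s\<in>S. ennreal (w s powr (-1 / (p - 1))) \<partial>lborel) = ennreal (I t powr r / r)"
    using set_nn_integral_dual_weight[OF t] by (simp add: S_def)
  have "ennreal (X powr p) \<le> (\<integral>\<^sup>+s\<in>S. ennreal (\<bar>g s\<bar> powr p * w s) \<partial>lborel) * ennreal ((I t powr r / r) powr (p - 1))"
    using I_pos[OF t] r_pos g(1)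
    by (intro set_nn_integral_Hoelder_weighted[OF p_gt _ _ w_meas _ w_pos X \<open>X \<ge> 0\<close> B]) (auto simp: S)
  also have "(\<integral>\<^sup>+s\<in>S. ennreal (\<bar>g s\<bar> powr p * w s) \<partial>lborel) = ?\<Phi>"
    by (intro nn_integral_cong) (simp add: w_def S_def indicator_def)
  finally have Hoelder: "ennreal (X powr p) \<le> ?\<Phi> * ennreal ((I t powr r / r) powr (p - 1))" .
  have "\<bar>u t\<bar> powr p * \<eta> t powr p * \<phi> t \<le> X powr p * (\<psi> t * I t powr (-p))"
    using u p_gt psi_pos[of t] t by (simp add: mult.assoc eta_powr_mult_phi X_def mult_right_mono powr_mono2)
  then have "ennreal (\<bar>u t\<bar> powr p * \<eta> t powr p * \<phi> t) \<le> ennreal (X powr p) * ennreal (\<psi> t * I t powr (-p))"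
    using psi_pos[of t] t by (simp add: ennreal_mult[symmetric] ennreal_leI)
  also have "\<dots> \<le> ?\<Phi> * ennreal ((I t powr r / r) powr (p - 1)) * ennreal (\<psi> t * I t powr (-p))"
    by (intro mult_right_mono Hoelder) auto
  also have "\<dots> = ennreal (k t) * ?\<Phi>"
    using psi_pos[of t] t by (simp add: k_eq[OF t, symmetric] ennreal_mult mult_ac)
  finally show ?thesis .
qed

lemma nn_integral_k_times_tail_le:
  fixes F :: "real \<Rightarrow> ennreal"
  assumes F: "F \<in> borel_measurable borel"
  shows "(\<integral>\<^sup>+t\<in>{0<..<a}. ennreal (k t) * (\<integral>\<^sup>+s\<in>{t<..<a}. F s \<partial>lborel) \<partial>lborel)
    \<le> (\<integral>\<^sup>+s\<in>{0<..<a}. ennreal (r powr (-p) * I s powr (-r)) * F s \<partial>lborel)"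
proof -
  define H where "H t s = ennreal (k t) * indicator {0<..<a} t * (F s * indicator {..<a} s)
    * indicator {(x, y). x < y} (t, s)" for t s
  have H_meas: "(\<lambda>(t, s). H t s) \<in> borel_measurable (lborel \<Otimes>\<^sub>M lborel)"
    unfolding H_def using k_indicator_measurable F sets_lborel_pair_less by measurable
  have "(\<integral>\<^sup>+t\<in>{0<..<a}. ennreal (k t) * (\<integral>\<^sup>+s\<in>{t<..<a}. F s \<partial>lborel) \<partial>lborel)
      = (\<integral>\<^sup>+t. (\<integral>\<^sup>+s. H t s \<partial>lborel) \<partial>lborel)"
  proof (intro nn_integral_cong)
    fix t :: real
    have "(\<integral>\<^sup>+s. H t s \<partial>lborel)
        = ennreal (k t) * indicator {0<..<a} t * (\<integral>\<^sup>+s\<in>{t<..<a}. F s \<partial>lborel)"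
      unfolding H_def using F
      by (subst nn_integral_cmult[symmetric]) (auto intro!: nn_integral_cong simp: indicator_def)
    then show "ennreal (k t) * (\<integral>\<^sup>+s\<in>{t<..<a}. F s \<partial>lborel) * indicator {0<..<a} t
        = (\<integral>\<^sup>+s. H t s \<partial>lborel)"
      by (simp add: mult_ac)
  qed
  also have "\<dots> = (\<integral>\<^sup>+s. (\<integral>\<^sup>+t. H t s \<partial>lborel) \<partial>lborel)"
    using lborel_pair.Fubini'[OF H_meas] by simp
  also have "\<dots> \<le> (\<integral>\<^sup>+s\<in>{0<..<a}. ennreal (r powr (-p) * I s powr (-r)) * F s \<partial>lborel)"
  proof (intro nn_integral_mono)
    fix s :: real
    show "(\<integral>\<^sup>+t. H t s \<partial>lborel) \<le> ennreal (r powr (-p) * I s powr (-r)) * F s * indicator {0<..<a} s"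
    proof (cases "s \<in> {0<..<a}")
      case True
      have "(\<lambda>t. ennreal (k t) * indicator {0<..<s} t) \<in> borel_measurable lborel"
        using True borel_measurable_ennreal_mult_continuous_on_indicator[of "\<lambda>_. 1" "{0<..<s}" k]
          continuous_on_subset[OF k_cont, of "{0<..<s}"] by force
      then have "(\<integral>\<^sup>+t. H t s \<partial>lborel) = F s * (\<integral>\<^sup>+t\<in>{0<..<s}. ennreal (k t) \<partial>lborel)"
        unfolding H_def using True
        by (subst nn_integral_cmult[symmetric])
          (auto intro!: nn_integral_cong simp: indicator_def mult_ac)
      also have "\<dots> \<le> F s * ennreal (r powr (-p) * I s powr (-r))"
        by (intro mult_left_mono set_nn_integral_k_le True) simp
      finally show ?thesis using True by (simp add: mult_ac)
    next
      case False
      then have "H t s = 0" for t by (auto simp: H_def indicator_def)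
      then show ?thesis by simp
    qed
  qed
  finally show ?thesis .
qed

lemma weighted_rhs_eta_aT_le:
  assumes T: "turning_point \<eta> a T"
  shows "weighted_rhs a p \<phi> (eta_aT \<phi> p a T) u \<le> weighted_rhs a p \<phi> \<eta> u"
  unfolding weighted_rhs_def
proof (intro nn_integral_mono)
  fix t
  show "ennreal (\<bar>u t\<bar> powr p * eta_aT \<phi> p a T t powr p * \<phi> t) * indicator {0<..<a} t
    \<le> ennreal (\<bar>u t\<bar> powr p * \<eta> t powr p * \<phi> t) * indicator {0<..<a} t"
  proof (cases "t \<in> {0<..<a}")
    case True
    then have "eta_aT \<phi> p a T t powr p \<le> \<eta> t powr p"
      using eta_aT_le_eta[OF T True] p_gt by (intro powr_mono2) auto
    moreover have "\<phi> t > 0" using True phi_pos by simp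
    ultimately show ?thesis
      using True by (auto intro!: ennreal_leI mult_left_mono mult_right_mono)
  qed simp
qed

lemma weighted_rhs_eta_le_iterated:
  fixes g u :: "real \<Rightarrow> real"
  assumes g: "g \<in> borel_measurable borel"
    and g_int: "\<And>t. t \<in> {0<..<a} \<Longrightarrow> g absolutely_integrable_on {t..a}"
    and u: "\<And>t. t \<in> {0<..<a} \<Longrightarrow> \<bar>u t\<bar> \<le> integral {t..a} (\<lambda>s. \<bar>g s\<bar>)"
  shows "weighted_rhs a p \<phi> \<eta> u \<le> (\<integral>\<^sup>+t\<in>{0<..<a}. ennreal (k t) *
    (\<integral>\<^sup>+s\<in>{t<..<a}. ennreal (\<bar>g s\<bar> powr p * (\<phi> s * I s powr r)) \<partial>lborel) \<partial>lborel)"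
  unfolding weighted_rhs_def
proof (intro nn_integral_mono)
  fix t
  show "ennreal (\<bar>u t\<bar> powr p * \<eta> t powr p * \<phi> t) * indicator {0<..<a} t
    \<le> ennreal (k t) * (\<integral>\<^sup>+s\<in>{t<..<a}. ennreal (\<bar>g s\<bar> powr p * (\<phi> s * I s powr r)) \<partial>lborel)
      * indicator {0<..<a} t"
    using pointwise_Hardy_bound[where u = u, OF _ g g_int u] by (cases "t \<in> {0<..<a}") auto
qed

lemma Hardy_inequality_borel:
  fixes g u :: "real \<Rightarrow> real"
  assumes g: "g \<in> borel_measurable borel"
    and g_int: "\<And>t. t \<in> {0<..<a} \<Longrightarrow> g absolutely_integrable_on {t..a}"
    and u: "\<And>t. t \<in> {0<..<a} \<Longrightarrow> \<bar>u t\<bar> \<le> integral {t..a} (\<lambda>s. \<bar>g s\<bar>)"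
  shows "weighted_rhs a p \<phi> \<eta> u \<le> ennreal (r powr (-p)) * energy a p \<phi> g"
proof -
  let ?g = "\<lambda>s. \<bar>g s\<bar> powr p"
  define F where "F s = ennreal (?g s * (\<phi> s * I s powr r)) * indicator {0<..<a} s" for s
  have cont: "continuous_on {0<..<a} \<phi>" "continuous_on {0<..<a} I"
    by (auto intro: continuous_on_subset[OF phi_cont_on] continuous_on_subset[OF I_cont])
  have "continuous_on {0<..<a} (\<lambda>s. \<phi> s * I s powr r)"
    using cont I_pos by (intro continuous_intros) force+
  then have F_meas: "F \<in> borel_measurable borel"
    unfolding F_def using g by (intro borel_measurable_ennreal_mult_continuous_on_indicator) auto
  have "weighted_rhs a p \<phi> \<eta> u
      \<le> (\<integral>\<^sup>+t\<in>{0<..<a}. ennreal (k t) * (\<integral>\<^sup>+s\<in>{t<..<a}. ennreal (?g s * (\<phi> s * I s powr r)) \<partial>lborel) \<partial>lborel)"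
    by (rule weighted_rhs_eta_le_iterated[OF g g_int u])
  also have "\<dots> = (\<integral>\<^sup>+t\<in>{0<..<a}. ennreal (k t) * (\<integral>\<^sup>+s\<in>{t<..<a}. F s \<partial>lborel) \<partial>lborel)"
  proof (intro nn_integral_cong)
    fix t :: real
    have "(\<integral>\<^sup>+s\<in>{t<..<a}. ennreal (?g s * (\<phi> s * I s powr r)) \<partial>lborel) = (\<integral>\<^sup>+s\<in>{t<..<a}. F s \<partial>lborel)"
      if "t > 0" using that by (intro nn_integral_cong) (auto simp: F_def indicator_def)
    then show "ennreal (k t) * (\<integral>\<^sup>+s\<in>{t<..<a}. ennreal (?g s * (\<phi> s * I s powr r)) \<partial>lborel) * indicator {0<..<a} t
      = ennreal (k t) * (\<integral>\<^sup>+s\<in>{t<..<a}. F s \<partial>lborel) * indicator {0<..<a} t"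
      by (cases "t \<in> {0<..<a}") auto
  qed
  also have "\<dots> \<le> (\<integral>\<^sup>+s\<in>{0<..<a}. ennreal (r powr (-p) * I s powr (-r)) * F s \<partial>lborel)"
    by (rule nn_integral_k_times_tail_le[OF F_meas])
  also have "\<dots> = (\<integral>\<^sup>+s. ennreal (r powr (-p)) * (ennreal (?g s * \<phi> s) * indicator {0<..<a} s) \<partial>lborel)"
  proof (intro nn_integral_cong)
    fix s
    show "ennreal (r powr (-p) * I s powr (-r)) * F s * indicator {0<..<a} s
      = ennreal (r powr (-p)) * (ennreal (?g s * \<phi> s) * indicator {0<..<a} s)"
    proof (cases "s \<in> {0<..<a}")
      case True
      then have "I s powr (-r) * I s powr r = 1" "\<phi> s > 0"
        using I_pos[OF True] phi_pos by (auto simp: powr_add[symmetric])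
      then show ?thesis
        using True by (simp add: F_def ennreal_mult[symmetric] mult_ac)
    qed (simp add: F_def)
  qed
  also have "\<dots> = ennreal (r powr (-p)) * energy a p \<phi> g"
  proof -
    have "(\<lambda>s. ennreal (?g s * \<phi> s) * indicator {0<..<a} s) \<in> borel_measurable borel"
      using g by (intro borel_measurable_ennreal_mult_continuous_on_indicator cont(1)) auto
    then show ?thesis unfolding energy_def by (intro nn_integral_cmult) simp
  qed
  finally show ?thesis .
qed

lemma energy_mono:
  assumes "\<And>s. s \<in> {0<..<a} \<Longrightarrow> \<bar>g' s\<bar> \<le> \<bar>g s\<bar>"
  shows "energy a p \<phi> g' \<le> energy a p \<phi> g"
  unfolding energy_def
proof (intro nn_integral_mono)
  fix s
  show "ennreal (\<bar>g' s\<bar> powr p * \<phi> s) * indicator {0<..<a} s \<le> ennreal (\<bar>g s\<bar> powr p * \<phi> s) * indicator {0<..<a} s"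
  proof (cases "s \<in> {0<..<a}")
    case True
    then have "\<bar>g' s\<bar> powr p \<le> \<bar>g s\<bar> powr p" "\<phi> s > 0"
      using assms p_gt phi_pos by (auto intro: powr_mono2)
    then show ?thesis by (auto intro!: ennreal_leI mult_right_mono)
  qed simp
qed

lemma Hardy_inequality:
  assumes T: "turning_point \<eta> a T" and E: "in_E a p \<phi> u g"
  shows "ennreal (((p - 1) / p) powr p) * weighted_rhs a p \<phi> (eta_aT \<phi> p a T) u \<le> energy a p \<phi> g"
proof -
  obtain g' where g': "g' \<in> borel_measurable borel"
    "\<And>t. t \<in> {0<..<a} \<Longrightarrow> g' absolutely_integrable_on {t..a}"
    "\<And>t. t \<in> {0<..<a} \<Longrightarrow> \<bar>u t\<bar> \<le> integral {t..a} (\<lambda>s. \<bar>g' s\<bar>)"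
    "\<And>s. s \<in> {0<..<a} \<Longrightarrow> \<bar>g' s\<bar> \<le> \<bar>g s\<bar>"
    using weak_deriv_on_borel_representative[OF a_pos] E by (auto simp: in_E_def)
  have "ennreal (r powr p) * weighted_rhs a p \<phi> (eta_aT \<phi> p a T) u
      \<le> ennreal (r powr p) * weighted_rhs a p \<phi> \<eta> u"
    by (intro mult_left_mono weighted_rhs_eta_aT_le[OF T]) auto
  also have "\<dots> \<le> ennreal (r powr p) * (ennreal (r powr (-p)) * energy a p \<phi> g')"
    by (intro mult_left_mono Hardy_inequality_borel[OF g'(1-3)]) auto
  also have "\<dots> = energy a p \<phi> g'"
    using r_pos by (simp add: ennreal_mult[symmetric] mult.assoc[symmetric] powr_add[symmetric])
  also have "\<dots> \<le> energy a p \<phi> g"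
    by (rule energy_mono[OF g'(4)])
  finally show ?thesis by (simp add: r_def)
qed

section \<open>Sharpness of the constant\<close>

lemma I_unbounded:
  assumes "0 < x" "x \<le> a"
  shows "\<exists>t\<in>{0<..<x}. I t > K"
proof -
  define A where "A = c2 powr (-q)"
  have A: "A > 0" using cpos by (simp add: A_def)
  define Y where "Y = max K 0 * \<epsilon> / A + a powr (-\<epsilon>) + 1"
  have Y: "Y > 0"
    using A eps_pos by (simp add: Y_def add_nonneg_pos)
  define t where "t = min (x / 2) (Y powr (-1 / \<epsilon>))"
  have t: "0 < t" "t < x" using assms Y by (auto simp: t_def)
  have "(Y powr (-1 / \<epsilon>)) powr (-\<epsilon>) \<le> t powr (-\<epsilon>)"
    using t eps_pos by (intro powr_mono2') (auto simp: t_def)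
  then have Y_le: "Y \<le> t powr (-\<epsilon>)"
    using Y eps_pos by (simp add: powr_powr)
  have "max K 0 + A / \<epsilon> = A * ((max K 0 * \<epsilon> / A + 1) / \<epsilon>)"
    using A eps_pos by (simp add: field_simps)
  also have "\<dots> \<le> A * ((t powr (-\<epsilon>) - a powr (-\<epsilon>)) / \<epsilon>)"
    using Y_le A eps_pos by (intro mult_left_mono divide_right_mono) (auto simp: Y_def)
  also have "\<dots> \<le> I t"
    using I_bounds[of t] t assms by (auto simp: A_def)
  finally have "max K 0 + A / \<epsilon> \<le> I t" .
  moreover have "A / \<epsilon> > 0" using A eps_pos by simp
  ultimately show ?thesis using t by (intro bexI[of _ t]) auto
qed

lemma I_powr_gap:
  assumes "0 < T" "T \<le> a" and e: "e > 0" and c: "0 \<le> c" "c < C"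
  shows "\<exists>\<tau>\<in>{0<..<T}. c * I \<tau> powr e < C * (I \<tau> powr e - I T powr e)"
proof -
  define Q where "Q = C * I T powr e / (C - c)"
  have Q: "Q \<ge> 0" using c by (simp add: Q_def)
  obtain \<tau> where \<tau>: "\<tau> \<in> {0<..<T}" "I \<tau> > Q powr (1 / e)"
    using I_unbounded[of T "Q powr (1 / e)"] assms by auto
  have "Q = (Q powr (1 / e)) powr e" using Q e by (simp add: powr_powr)
  also have "\<dots> < I \<tau> powr e" using \<tau>(2) e by (intro powr_less_mono2) auto
  finally have "c * I \<tau> powr e < C * (I \<tau> powr e - I T powr e)"
    using c by (simp add: Q_def divide_less_eq algebra_simps)
  then show ?thesis using \<tau>(1) by blast
qed

definition "trunc_u \<alpha> \<tau> t = (if t \<le> \<tau> then I \<tau> powr \<alpha> else I t powr \<alpha>)"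
definition "trunc_g \<alpha> \<tau> t = (if t \<le> \<tau> then 0 else - (\<alpha> * I t powr (\<alpha> - 1) * \<psi> t))"

lemma trunc_u_cont:
  assumes "0 < x" and \<alpha>: "\<alpha> > 0" and \<tau>: "\<tau> \<in> {0<..<a}"
  shows "continuous_on {x..a} (trunc_u \<alpha> \<tau>)"
proof -
  have "continuous_on {x..a} (\<lambda>t. min (I t) (I \<tau>) powr \<alpha>)"
    using assms I_nonneg I_pos[OF \<tau>]
    by (intro continuous_on_powr' continuous_on_min I_cont_on continuous_on_const) auto
  moreover have "min (I t) (I \<tau>) powr \<alpha> = trunc_u \<alpha> \<tau> t" if "t \<in> {x..a}" for t
    using that assms I_antimono[of t \<tau>] I_antimono[of \<tau> t] by (auto simp: trunc_u_def min_def)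
  ultimately show ?thesis by (rule continuous_on_eq) simp
qed

lemma trunc_u_deriv:
  assumes t: "t \<in> {0<..<a}" "t \<noteq> \<tau>" and \<tau>: "\<tau> \<in> {0<..<a}"
  shows "(trunc_u \<alpha> \<tau> has_real_derivative trunc_g \<alpha> \<tau> t) (at t)"
proof (cases "t < \<tau>")
  case True
  have "((\<lambda>_. I \<tau> powr \<alpha>) has_real_derivative 0) (at t)" by simp
  then have "(trunc_u \<alpha> \<tau> has_real_derivative 0) (at t)"
    by (rule has_field_derivative_transform_within_open[of _ _ _ "{..<\<tau>}"])
      (use True in \<open>auto simp: trunc_u_def\<close>)
  then show ?thesis using True by (simp add: trunc_g_def)
next
  case False
  with t have "\<tau> < t" by simp
  have "((\<lambda>s. I s powr \<alpha>) has_real_derivative \<alpha> * I t powr (\<alpha> - 1) * - \<psi> t) (at t)"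
    by (rule I_powr_deriv[OF t(1) I_pos[OF t(1)]])
  then have "(trunc_u \<alpha> \<tau> has_real_derivative \<alpha> * I t powr (\<alpha> - 1) * - \<psi> t) (at t)"
    by (rule has_field_derivative_transform_within_open[of _ _ _ "{\<tau><..}"])
      (use \<open>\<tau> < t\<close> in \<open>auto simp: trunc_u_def\<close>)
  then show ?thesis using \<open>\<tau> < t\<close> by (simp add: trunc_g_def)
qed

lemma weak_deriv_on_trunc:
  assumes \<alpha>: "\<alpha> > 0" and \<tau>: "\<tau> \<in> {0<..<a}"
  shows "weak_deriv_on a (trunc_u \<alpha> \<tau>) (trunc_g \<alpha> \<tau>)"
proof -
  let ?u = "trunc_u \<alpha> \<tau>" and ?g = "trunc_g \<alpha> \<tau>"
  have g_integral: "(?g has_integral ?u y - ?u x) {x..y}" if "0 < x" "x \<le> y" "y \<le> a" for x y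
  proof (rule fundamental_theorem_of_calculus_interior_strong[of "{\<tau>}"])
    show "continuous_on {x..y} ?u"
      using that \<alpha> \<tau> by (intro continuous_on_subset[OF trunc_u_cont[of x]]) auto
    fix t assume "t \<in> {x<..<y} - {\<tau>}"
    then have "t \<in> {0<..<a}" "t \<noteq> \<tau>" using that by auto
    then show "(?u has_vector_derivative ?g t) (at t)"
      using trunc_u_deriv[OF _ _ \<tau>] has_real_derivative_iff_has_vector_derivative by blast
  qed (use that in auto)
  have g_nonpos: "?g t \<le> 0" if "t \<in> {0<..a}" for t
    using that psi_pos[of t] \<alpha> by (auto simp: trunc_g_def)
  have "?g absolutely_integrable_on {x..a}" if "x \<in> {0<..a}" for x
  proof -
    have g: "?g integrable_on {x..a}" using g_integral[of x a] that by auto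
    have "(\<lambda>t. - ?g t) integrable_on {x..a}"
      using integrable_neg[OF g] by simp
    then have "(\<lambda>t. \<bar>?g t\<bar>) integrable_on {x..a}"
      by (rule integrable_eq) (use that g_nonpos in auto)
    with g show ?thesis by (simp add: absolutely_integrable_on_def)
  qed
  then show ?thesis
    unfolding weak_deriv_on_def using g_integral by (metis integral_unique)
qed

lemma trunc_u_integrable:
  assumes "\<alpha> > 0" and "\<tau> \<in> {0<..<a}"
  shows "trunc_u \<alpha> \<tau> absolutely_integrable_on {0..a}"
proof (rule nonnegative_absolutely_integrable_1)
  have "trunc_u \<alpha> \<tau> integrable_on {0..\<tau>}"
    by (rule integrable_eq[OF integrable_const_ivl[of "I \<tau> powr \<alpha>" 0 \<tau>]]) (auto simp: trunc_u_def)
  moreover have "continuous_on {\<tau>..a} (trunc_u \<alpha> \<tau>)"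
    using assms by (intro trunc_u_cont) auto
  then have "trunc_u \<alpha> \<tau> integrable_on {\<tau>..a}"
    by (rule integrable_continuous_interval)
  ultimately show "trunc_u \<alpha> \<tau> integrable_on {0..a}"
    using assms by (intro Henstock_Kurzweil_Integration.integrable_combine[of 0 \<tau> a]) auto
qed (simp add: trunc_u_def)

lemma energy_trunc:
  assumes \<alpha>: "r < \<alpha>" and \<tau>: "\<tau> \<in> {0<..<a}"
  defines "e \<equiv> p * \<alpha> - p + 1"
  shows "energy a p \<phi> (trunc_g \<alpha> \<tau>) = ennreal (\<alpha> powr p * (I \<tau> powr e / e))"
proof -
  have e: "e > 0" using \<alpha> p_gt by (simp add: e_def r_def field_simps)
  have "energy a p \<phi> (trunc_g \<alpha> \<tau>) = (\<integral>\<^sup>+t\<in>{\<tau><..<a}. ennreal (\<alpha> powr p * (I t powr (e - 1) * \<psi> t)) \<partial>lborel)"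
    unfolding energy_def
  proof (intro nn_integral_cong)
    fix t :: real
    show "ennreal (\<bar>trunc_g \<alpha> \<tau> t\<bar> powr p * \<phi> t) * indicator {0<..<a} t
      = ennreal (\<alpha> powr p * (I t powr (e - 1) * \<psi> t)) * indicator {\<tau><..<a} t"
    proof (cases "t \<in> {\<tau><..<a}")
      case True
      then have t: "t \<in> {0<..<a}" using \<tau> by auto
      have "\<alpha> > 0" using \<alpha> r_pos by simp
      then have "\<bar>trunc_g \<alpha> \<tau> t\<bar> = \<alpha> * I t powr (\<alpha> - 1) * \<psi> t"
        using True psi_pos[of t] t by (simp add: trunc_g_def abs_mult)
      moreover have "(I t powr (\<alpha> - 1)) powr p = I t powr (e - 1)"
        by (simp add: powr_powr e_def algebra_simps)
      ultimately have "\<bar>trunc_g \<alpha> \<tau> t\<bar> powr p = \<alpha> powr p * I t powr (e - 1) * \<psi> t powr p"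
        using \<open>\<alpha> > 0\<close> psi_pos[of t] t by (simp add: powr_mult)
      then have "\<bar>trunc_g \<alpha> \<tau> t\<bar> powr p * \<phi> t = \<alpha> powr p * (I t powr (e - 1) * (\<psi> t powr p * \<phi> t))"
        by (simp add: mult_ac)
      also have "\<psi> t powr p * \<phi> t = \<psi> t"
        using t by (intro psi_powr_mult_phi) auto
      finally show ?thesis using True t by simp
    qed (use \<tau> in \<open>auto simp: trunc_g_def indicator_def\<close>)
  qed
  also have "\<dots> = ennreal (\<alpha> powr p * (I \<tau> powr e / e))"
  proof (rule nn_integral_has_integral_lebesgue')
    fix t assume "t \<in> {\<tau><..<a}"
    then show "0 \<le> \<alpha> powr p * (I t powr (e - 1) * \<psi> t)"
      using \<tau> by (intro mult_nonneg_nonneg I_powr_mult_psi_nonneg) auto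
  qed (use \<tau> e I_a has_integral_mult_right[OF I_powr_has_integral[of \<tau> a e], of "\<alpha> powr p"] in simp)
  finally show ?thesis .
qed

lemma weighted_rhs_trunc_ge:
  assumes \<alpha>: "r < \<alpha>" and \<tau>: "0 < \<tau>" "\<tau> < T" and T: "turning_point \<eta> a T"
  defines "e \<equiv> p * \<alpha> - p + 1"
  shows "ennreal ((I \<tau> powr e - I T powr e) / e) \<le> weighted_rhs a p \<phi> (eta_aT \<phi> p a T) (trunc_u \<alpha> \<tau>)"
proof -
  have e: "e > 0" using \<alpha> p_gt by (simp add: e_def r_def field_simps)
  have Ta: "T < a" using T by (simp add: turning_point_def)
  have "ennreal ((I \<tau> powr e - I T powr e) / e) = (\<integral>\<^sup>+t\<in>{\<tau><..<T}. ennreal (I t powr (e - 1) * \<psi> t) \<partial>lborel)"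
  proof (rule nn_integral_has_integral_lebesgue'[symmetric])
    fix t assume "t \<in> {\<tau><..<T}"
    then show "0 \<le> I t powr (e - 1) * \<psi> t"
      using \<tau> Ta by (intro I_powr_mult_psi_nonneg) auto
  qed (use \<tau> Ta e I_powr_has_integral[of \<tau> T e] in simp)
  also have "\<dots> \<le> weighted_rhs a p \<phi> (eta_aT \<phi> p a T) (trunc_u \<alpha> \<tau>)"
    unfolding weighted_rhs_def
  proof (intro nn_integral_mono)
    fix t
    show "ennreal (I t powr (e - 1) * \<psi> t) * indicator {\<tau><..<T} t
      \<le> ennreal (\<bar>trunc_u \<alpha> \<tau> t\<bar> powr p * eta_aT \<phi> p a T t powr p * \<phi> t) * indicator {0<..<a} t"
    proof (cases "t \<in> {\<tau><..<T}")
      case True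
      then have t: "t \<in> {0<..<a}" using \<tau> Ta by auto
      have "\<alpha> * p + -p = e - 1" by (simp add: e_def algebra_simps)
      then have "\<bar>trunc_u \<alpha> \<tau> t\<bar> powr p * eta_aT \<phi> p a T t powr p * \<phi> t = I t powr (e - 1) * \<psi> t"
        using True I_pos[OF t]
        by (simp add: trunc_u_def eta_aT_def eta_a_eq mult.assoc eta_powr_mult_phi[OF t] powr_powr
            powr_add[symmetric] mult.left_commute[of "\<psi> t"])
      then show ?thesis using True t by simp
    qed simp
  qed
  finally show ?thesis .
qed

lemma Hardy_constant_sharp:
  assumes T: "turning_point \<eta> a T" and C: "C > ((p - 1) / p) powr p"
  shows "\<exists>u g. in_E a p \<phi> u g \<and> energy a p \<phi> g < ennreal C * weighted_rhs a p \<phi> (eta_aT \<phi> p a T) u"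
proof -
  have T_in: "T \<in> {0<..<a}" using T by (simp add: turning_point_def)
  have C_pos: "C > 0" using C powr_ge_zero[of "(p - 1) / p" p] by linarith
  have r_less: "r < C powr (1 / p)"
    using powr_less_mono2[of "1 / p" "r powr p" C] C r_pos p_gt by (simp add: r_def powr_powr)
  define \<alpha> where "\<alpha> = (r + C powr (1 / p)) / 2"
  define e where "e = p * \<alpha> - p + 1"
  have \<alpha>: "r < \<alpha>" "\<alpha> > 0" using r_less r_pos by (simp_all add: \<alpha>_def)
  have "\<alpha> powr p < (C powr (1 / p)) powr p"
    using r_less \<alpha> p_gt by (intro powr_less_mono2) (auto simp: \<alpha>_def)
  then have \<alpha>_C: "\<alpha> powr p < C" using C_pos p_gt by (simp add: powr_powr)
  have e: "e > 0" using \<alpha> p_gt by (simp add: e_def r_def field_simps)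
  obtain \<tau> where \<tau>: "\<tau> \<in> {0<..<T}" "\<alpha> powr p * I \<tau> powr e < C * (I \<tau> powr e - I T powr e)"
    using I_powr_gap[of T e "\<alpha> powr p" C] e \<alpha>_C T_in by fastforce
  then have "\<alpha> powr p * (I \<tau> powr e / e) < C * ((I \<tau> powr e - I T powr e) / e)"
    using e by (simp add: divide_strict_right_mono)
  moreover have "0 \<le> \<alpha> powr p * (I \<tau> powr e / e)" using e by simp
  ultimately have "ennreal (\<alpha> powr p * (I \<tau> powr e / e)) < ennreal (C * ((I \<tau> powr e - I T powr e) / e))"
    by (intro ennreal_lessI) auto
  moreover have "energy a p \<phi> (trunc_g \<alpha> \<tau>) = ennreal (\<alpha> powr p * (I \<tau> powr e / e))"
    using energy_trunc[OF \<alpha>(1), of \<tau>] \<tau>(1) T_in by (simp add: e_def)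
  moreover have "ennreal (C * ((I \<tau> powr e - I T powr e) / e)) = ennreal C * ennreal ((I \<tau> powr e - I T powr e) / e)"
    by (rule ennreal_mult') (use C_pos in simp)
  ultimately have "energy a p \<phi> (trunc_g \<alpha> \<tau>) < ennreal C * ennreal ((I \<tau> powr e - I T powr e) / e)"
    by simp
  also have "\<dots> \<le> ennreal C * weighted_rhs a p \<phi> (eta_aT \<phi> p a T) (trunc_u \<alpha> \<tau>)"
    using weighted_rhs_trunc_ge[OF \<alpha>(1) _ _ T] \<tau>(1) by (intro mult_left_mono) (auto simp: e_def)
  finally have "energy a p \<phi> (trunc_g \<alpha> \<tau>) < ennreal C * weighted_rhs a p \<phi> (eta_aT \<phi> p a T) (trunc_u \<alpha> \<tau>)" .
  moreover have "in_E a p \<phi> (trunc_u \<alpha> \<tau>) (trunc_g \<alpha> \<tau>)"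
    using \<tau>(1) T_in \<alpha> trunc_u_integrable weak_deriv_on_trunc energy_trunc[OF \<alpha>(1)]
    by (auto simp: in_E_def trunc_u_def I_a)
  ultimately show ?thesis by blast
qed

end

theorem proposition2p5:
  fixes a p c1 c2 \<delta> :: real and \<phi> \<phi>' :: "real \<Rightarrow> real"
  assumes a_pos: "a > 0" and p_gt: "p > 1"
    and phi_cont: "continuous_on {0..a} \<phi>"
    and phi_C1: "\<forall>t\<in>{0<..a}. (\<phi> has_real_derivative \<phi>' t) (at t within {0<..a})"
    and phi'_cont: "continuous_on {0<..a} \<phi>'"
    and phi0: "\<phi> 0 = 0"
    and phi_pos: "\<forall>t\<in>{0<..a}. \<phi> t > 0"
    and cpos: "c1 > 0" "c2 > 0" "\<delta> > 0"
    and bounds: "\<forall>t\<in>{0<..a}. c1 * t powr (p - 1 + \<delta>) \<le> \<phi> t \<and> \<phi> t \<le> c2 * t powr (p - 1 + \<delta>)"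
    and twice: "\<forall>t\<in>{0<..<a}. \<phi>' differentiable (at t)"
    and logconc: "\<forall>t\<in>{0<..<a}. \<exists>d. ((\<lambda>s. \<phi>' s / \<phi> s) has_real_derivative d) (at t) \<and> d < 0"
  shows
    "(\<exists>!T. T \<in> {0<..<a} \<and>
        (\<forall>t\<in>{0<..<T}. \<exists>d. (eta_a \<phi> p a has_real_derivative d) (at t) \<and> d < 0) \<and>
        (\<forall>t\<in>{T<..<a}. \<exists>d. (eta_a \<phi> p a has_real_derivative d) (at t) \<and> d > 0))
     \<and>
     (\<forall>T. T \<in> {0<..<a} \<and>
        (\<forall>t\<in>{0<..<T}. \<exists>d. (eta_a \<phi> p a has_real_derivative d) (at t) \<and> d < 0) \<and>
        (\<forall>t\<in>{T<..<a}. \<exists>d. (eta_a \<phi> p a has_real_derivative d) (at t) \<and> d > 0)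
      \<longrightarrow>
        (\<forall>u g. in_E a p \<phi> u g \<longrightarrow>
           energy a p \<phi> g \<ge> ennreal (((p - 1) / p) powr p) * weighted_rhs a p \<phi> (eta_aT \<phi> p a T) u)
        \<and>
        (\<forall>C. C > ((p - 1) / p) powr p \<longrightarrow>
           (\<exists>u g. in_E a p \<phi> u g \<and>
              energy a p \<phi> g < ennreal C * weighted_rhs a p \<phi> (eta_aT \<phi> p a T) u)))"
proof -
  interpret weighted_hardy a p c1 c2 \<delta> \<phi> \<phi>'
    using a_pos p_gt phi_cont phi_C1 phi'_cont phi_pos cpos bounds logconc by unfold_locales auto
  have "\<exists>!T. turning_point \<eta> a T"
    by (rule turning_point_eta)
  moreover have "(\<forall>u g. in_E a p \<phi> u g \<longrightarrow>
        energy a p \<phi> g \<ge> ennreal (((p - 1) / p) powr p) * weighted_rhs a p \<phi> (eta_aT \<phi> p a T) u)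
      \<and> (\<forall>C. C > ((p - 1) / p) powr p \<longrightarrow>
        (\<exists>u g. in_E a p \<phi> u g \<and> energy a p \<phi> g < ennreal C * weighted_rhs a p \<phi> (eta_aT \<phi> p a T) u))"
    if "turning_point \<eta> a T" for T
    using Hardy_inequality[OF that] Hardy_constant_sharp[OF that] by blast
  ultimately show ?thesis
    unfolding eta_a_eq turning_point_def by blast
qed

end
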